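(* Let $S$ be a set of tasks reported as completed by an algorithm $A$ of type GroupLIS$(\beta)$ in a time interval $I$. Then at least $|S|-n$ of these tasks have their absolute task execution fully contained in $I$.
   Context: Model: $n$ processors with ids $1,\dots,n$ and a shared repository; tasks with ids, arrival times and costs are injected over time, processors may crash and restart. A task is pending if injected and its completion not yet reported. A processor repeatedly obtains the pending set, chooses a task, executes it (taking time proportional to its cost) and reports it; execution is non-preemptive and a crash loses progress. An absolute task execution of task $\tau$ is an interval $[t,t']$ such that a processor schedules $\tau$ at time $t$ and reports its completion at $t'$ without stopping its execution within $[t,t')$. An algorithm is of type GroupLIS$(\beta)$ if it partitions pending tasks into classes of equal cost, sorts each class in increasing order of arrival time, and whenever a class contains at least $\beta n^2$ pending tasks and a processor $p$ schedules a task from that class, it schedules the $(p\cdot\beta n)$-th task of the class. *)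

theory Defs
  imports "HOL-Analysis.Analysis"
begin

text \<open>
  An attempt (tau, s, e, r) of
  processor p means: p scheduled task tau at time s and ran it without
  stopping until time e; if r = True, p reported the completion of tau at
  time e (the attempt is then an absolute task execution [s,e] of tau);
  if r = False, the execution was stopped at time e by a crash (progress lost).
\<close>

type_synonym 'a attempt = "'a \<times> real \<times> real \<times> bool"

definition valid_trace :: "nat \<Rightarrow> (nat \<Rightarrow> 'a attempt set) \<Rightarrow> bool" where
  "valid_trace n att \<longleftrightarrow>
     (\<forall>p. p \<notin> {1..n} \<longrightarrow> att p = {}) \<and>
     (\<forall>p\<in>{1..n}. \<forall>\<tau> s e r. (\<tau>, s, e, r) \<in> att p \<longrightarrow> s \<le> e) \<and>
     (\<forall>p\<in>{1..n}. \<forall>\<tau> s e r \<sigma> u v q.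
        (\<tau>, s, e, r) \<in> att p \<longrightarrow> (\<sigma>, u, v, q) \<in> att p \<longrightarrow>
        (\<tau>, s, e, r) \<noteq> (\<sigma>, u, v, q) \<longrightarrow> e \<le> u \<or> v \<le> s)"

definition abs_exec :: "nat \<Rightarrow> (nat \<Rightarrow> 'a attempt set) \<Rightarrow> 'a \<Rightarrow> real \<Rightarrow> real \<Rightarrow> bool" where
  "abs_exec n att \<tau> s e \<longleftrightarrow> (\<exists>p\<in>{1..n}. (\<tau>, s, e, True) \<in> att p)"

definition reported_in :: "nat \<Rightarrow> (nat \<Rightarrow> 'a attempt set) \<Rightarrow> real set \<Rightarrow> 'a set" where
  "reported_in n att I = {\<tau>. \<exists>p\<in>{1..n}. \<exists>s e. (\<tau>, s, e, True) \<in> att p \<and> e \<in> I}"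

definition pending :: "('a \<Rightarrow> real) \<Rightarrow> nat \<Rightarrow> (nat \<Rightarrow> 'a attempt set) \<Rightarrow> real \<Rightarrow> 'a set" where
  "pending arrival n att t =
     {\<tau>. arrival \<tau> \<le> t \<and> \<not> (\<exists>p\<in>{1..n}. \<exists>s e. (\<tau>, s, e, True) \<in> att p \<and> e < t)}"

definition arr_before :: "('a::linorder \<Rightarrow> real) \<Rightarrow> 'a \<Rightarrow> 'a \<Rightarrow> bool" where
  "arr_before arrival x y \<longleftrightarrow> arrival x < arrival y \<or> (arrival x = arrival y \<and> x < y)"

text \<open>The k-th (1-based) task of C in increasing order of arrival.\<close>
definition kth :: "('a::linorder \<Rightarrow> real) \<Rightarrow> 'a set \<Rightarrow> nat \<Rightarrow> 'a" where
  "kth arrival C k = (THE x. x \<in> C \<and> card {y\<in>C. arr_before arrival y x} + 1 = k)"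

definition group_lis :: "nat \<Rightarrow> ('a::linorder \<Rightarrow> real) \<Rightarrow> ('a \<Rightarrow> real) \<Rightarrow> nat
    \<Rightarrow> (nat \<Rightarrow> 'a attempt set) \<Rightarrow> bool" where
  "group_lis \<beta> arrival cost n att \<longleftrightarrow>
     (\<forall>p\<in>{1..n}. \<forall>\<tau> s e r. (\<tau>, s, e, r) \<in> att p \<longrightarrow>
        \<tau> \<in> pending arrival n att s \<and>
        (let C = {\<sigma> \<in> pending arrival n att s. cost \<sigma> = cost \<tau>} in
          card C \<ge> \<beta> * n^2 \<longrightarrow> \<tau> = kth arrival C (p * \<beta> * n)))"

end

theory Submission
  imports Defs
begin

text \<open>
  A task reported at a time in I whose absolute execution is not contained in I must have
  been scheduled before I (I is an interval), so its execution straddles the left end of I.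
  Two such executions on one processor would overlap, hence each processor contributes at
  most one of them, and at most n tasks of S are exceptional.
\<close>

lemma straddling_intervals_overlap:
  fixes I :: "real set"
  assumes "is_interval I" and "s \<notin> I" "e \<in> I" "u \<notin> I" "v \<in> I" and "s \<le> e" "u \<le> v"
  shows "u < e \<and> s < v"
  using mem_is_interval_1_I[OF assms(1), where a = e and b = u and c = v]
    mem_is_interval_1_I[OF assms(1), where a = v and b = s and c = e] assms
  by (meson not_le)

lemma valid_trace_straddling_attempt_unique:
  assumes "valid_trace n att" and "is_interval I" and "p \<in> {1..n}"
    and "(\<tau>, s, e, True) \<in> att p" "s \<notin> I" "e \<in> I"
    and "(\<sigma>, u, v, True) \<in> att p" "u \<notin> I" "v \<in> I"
  shows "\<tau> = \<sigma>"
proof (rule ccontr)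
  assume "\<tau> \<noteq> \<sigma>"
  moreover note assms(1,3,4,7)
  ultimately have "e \<le> u \<or> v \<le> s" and "s \<le> e" "u \<le> v"
    unfolding valid_trace_def by (metis prod.inject)+
  with straddling_intervals_overlap[OF assms(2,5,6,8,9)] show False by linarith
qed

lemma card_reported_not_contained_le:
  assumes "valid_trace n att" and "is_interval I" and "S \<subseteq> reported_in n att I"
  shows "card {\<tau>\<in>S. \<not> (\<exists>s e. abs_exec n att \<tau> s e \<and> {s..e} \<subseteq> I)} \<le> n"
proof -
  let ?B = "{\<tau>\<in>S. \<not> (\<exists>s e. abs_exec n att \<tau> s e \<and> {s..e} \<subseteq> I)}"
  let ?straddles = "\<lambda>\<tau> p. \<exists>s e. (\<tau>, s, e, True) \<in> att p \<and> s \<notin> I \<and> e \<in> I"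
  have "\<exists>p. p \<in> {1..n} \<and> ?straddles \<tau> p" if "\<tau> \<in> ?B" for \<tau>
  proof -
    from that assms(3) obtain p s e where p: "p \<in> {1..n}" "(\<tau>, s, e, True) \<in> att p" "e \<in> I"
      unfolding reported_in_def by blast
    have "s \<notin> I"
    proof
      assume "s \<in> I"
      then have "{s..e} \<subseteq> I"
        using mem_is_interval_1_I[OF assms(2) _ \<open>e \<in> I\<close>] by auto
      with p(1,2) that show False unfolding abs_exec_def by blast
    qed
    with p show ?thesis by blast
  qed
  moreover have "\<tau> = \<sigma>" if "p \<in> {1..n}" "?straddles \<tau> p" "?straddles \<sigma> p" for \<tau> \<sigma> p
    using that(2,3) valid_trace_straddling_attempt_unique[OF assms(1,2) that(1)] by blast
  ultimately have "card ?B \<le> card {1..n}"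
    by (intro card_le_if_inj_on_rel[where r = ?straddles]) simp_all
  then show ?thesis by simp
qed

theorem lemma10:
  fixes n \<beta> :: nat and arrival cost :: "'a::linorder \<Rightarrow> real"
    and att :: "nat \<Rightarrow> 'a attempt set" and I :: "real set" and S :: "'a set"
  assumes "valid_trace n att"
    and "group_lis \<beta> arrival cost n att"
    and "is_interval I"
    and "finite S"
    and "S \<subseteq> reported_in n att I"
  shows "card {\<tau>\<in>S. \<exists>s e. abs_exec n att \<tau> s e \<and> {s..e} \<subseteq> I} \<ge> card S - n"
proof -
  let ?contained = "\<lambda>\<tau>. \<exists>s e. abs_exec n att \<tau> s e \<and> {s..e} \<subseteq> I"
  let ?G = "{\<tau>\<in>S. ?contained \<tau>}" and ?B = "{\<tau>\<in>S. \<not> ?contained \<tau>}"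
  have "S = ?G \<union> ?B" by blast
  then have "card S = card (?G \<union> ?B)" by (rule arg_cong)
  also have "\<dots> \<le> card ?G + card ?B" by (rule card_Un_le)
  also have "\<dots> \<le> card ?G + n"
    using card_reported_not_contained_le[OF assms(1,3,5)] by simp
  finally show ?thesis by linarith
qed

end
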